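(* Let $X$ and $Y$ be topological spaces. If $C(X)$ has the countable sup property and $Y$ has calibre $\aleph_1$, then $C(X\times Y)$ has the countable sup property.
   Context: $C(Z)$ is the vector lattice of real-valued continuous functions on $Z$ with the pointwise order; $X\times Y$ has the product topology. A vector lattice has the countable sup property if every nonempty subset possessing a supremum contains a countable subset with the same supremum. $Y$ has calibre $\aleph_1$ if every uncountable family of nonempty open subsets of $Y$ contains an uncountable subfamily with nonempty intersection. *)

theory Defs
  imports "HOL-Analysis.Analysis"
begin

text \<open>C(Z): real-valued continuous functions on the space Z. Elements are
  represented by functions on the carrier type; only their values on
  topspace Z matter. The order is pointwise on topspace Z.\<close>

definition Cfun :: "'a topology \<Rightarrow> ('a \<Rightarrow> real) set" where
  "Cfun Z = {f. continuous_map Z euclideanreal f}"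

definition Cle :: "'a topology \<Rightarrow> ('a \<Rightarrow> real) \<Rightarrow> ('a \<Rightarrow> real) \<Rightarrow> bool" where
  "Cle Z f g \<longleftrightarrow> (\<forall>x\<in>topspace Z. f x \<le> g x)"

definition is_Csup :: "'a topology \<Rightarrow> ('a \<Rightarrow> real) set \<Rightarrow> ('a \<Rightarrow> real) \<Rightarrow> bool" where
  "is_Csup Z F s \<longleftrightarrow> s \<in> Cfun Z \<and> (\<forall>f\<in>F. Cle Z f s) \<and>
     (\<forall>u\<in>Cfun Z. (\<forall>f\<in>F. Cle Z f u) \<longrightarrow> Cle Z s u)"

definition countable_sup_property :: "'a topology \<Rightarrow> bool" where
  "countable_sup_property Z \<longleftrightarrow>
     (\<forall>F s. F \<subseteq> Cfun Z \<and> F \<noteq> {} \<and> is_Csup Z F s \<longrightarrow>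
        (\<exists>G. G \<subseteq> F \<and> countable G \<and> G \<noteq> {} \<and> is_Csup Z G s))"

definition calibre_aleph1 :: "'a topology \<Rightarrow> bool" where
  "calibre_aleph1 Y \<longleftrightarrow>
     (\<forall>\<U>. \<U> \<subseteq> {U. openin Y U \<and> U \<noteq> {}} \<and> uncountable \<U> \<longrightarrow>
        (\<exists>\<V>. \<V> \<subseteq> \<U> \<and> uncountable \<V> \<and> \<Inter>\<V> \<noteq> {}))"

end

theory Submission
  imports Defs
begin

text \<open>
  The countable sup property of C(Z) is equivalent to a chain condition: every family of
  continuous functions with nonempty, pairwise disjoint cozero sets is countable.
  If s is the supremum of F, choose for each n a maximal disjoint family of cozero sets on each
  of which some member of F exceeds s - 1/(n+1); under the chain condition it is countable,
  and the members of F so chosen already have supremum s. Conversely, the constant 1 is the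
  supremum of the [0,1]-valued functions whose cozero set lies inside, or misses, every member
  of a given disjoint family, and a countable subfamily with the same supremum must meet every
  member. Finally, the chain condition passes to X \<times> Y: choose for each member h of an
  uncountable disjoint family on X \<times> Y a point x(h) of X at which h(x(h), -) does not vanish
  identically; by calibre aleph-1 uncountably many of the open sets {y. h(x(h), y) \<noteq> 0}
  share a point y, and the slices at y form an uncountable disjoint family on X.
\<close>

definition cozero :: "'a topology \<Rightarrow> ('a \<Rightarrow> real) \<Rightarrow> 'a set" where
  "cozero Z h = {x \<in> topspace Z. h x \<noteq> 0}"

lemma cozero_iff [simp]: "x \<in> cozero Z h \<longleftrightarrow> x \<in> topspace Z \<and> h x \<noteq> 0"
  by (simp add: cozero_def)

definition cozero_ccc :: "'a topology \<Rightarrow> bool" where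
  "cozero_ccc Z \<longleftrightarrow>
     (\<forall>H\<subseteq>Cfun Z. (\<forall>h\<in>H. cozero Z h \<noteq> {}) \<and> pairwise (\<lambda>h k. disjnt (cozero Z h) (cozero Z k)) H
        \<longrightarrow> countable H)"

lemma is_CsupI:
  assumes "s \<in> Cfun Z" "\<And>f x. f \<in> F \<Longrightarrow> x \<in> topspace Z \<Longrightarrow> f x \<le> s x"
    and "\<And>u x. u \<in> Cfun Z \<Longrightarrow> (\<And>f x. f \<in> F \<Longrightarrow> x \<in> topspace Z \<Longrightarrow> f x \<le> u x) \<Longrightarrow>
           x \<in> topspace Z \<Longrightarrow> s x \<le> u x"
  shows "is_Csup Z F s"
  using assms unfolding is_Csup_def Cle_def by blast

lemma is_Csup_upper: "is_Csup Z F s \<Longrightarrow> f \<in> F \<Longrightarrow> x \<in> topspace Z \<Longrightarrow> f x \<le> s x"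
  unfolding is_Csup_def Cle_def by blast

lemma is_Csup_least:
  "is_Csup Z F s \<Longrightarrow> u \<in> Cfun Z \<Longrightarrow> (\<And>f x. f \<in> F \<Longrightarrow> x \<in> topspace Z \<Longrightarrow> f x \<le> u x) \<Longrightarrow>
     x \<in> topspace Z \<Longrightarrow> s x \<le> u x"
  unfolding is_Csup_def Cle_def by blast

lemma openin_cozero: "h \<in> Cfun Z \<Longrightarrow> openin Z (cozero Z h)"
  unfolding cozero_def Cfun_def
  using openin_continuous_map_preimage[of Z euclideanreal h "-{0}"] by auto

lemma maximal_pairwise_disjnt_subfamily:
  assumes "\<And>a. a \<in> A \<Longrightarrow> c a \<noteq> {}"
  shows "\<exists>M\<subseteq>A. pairwise (\<lambda>a b. disjnt (c a) (c b)) M \<and> (\<forall>a\<in>A. \<exists>m\<in>M. \<not> disjnt (c a) (c m))"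
proof -
  let ?D = "{M. M \<subseteq> A \<and> pairwise (\<lambda>a b. disjnt (c a) (c b)) M}"
  have "\<forall>\<C>\<in>chains ?D. \<Union>\<C> \<in> ?D"
  proof
    fix \<C> assume "\<C> \<in> chains ?D"
    then have "chain\<^sub>\<subseteq> \<C>" "\<C> \<subseteq> ?D" unfolding chains_def by auto
    then have "\<Union>\<C> \<subseteq> A" "pairwise (\<lambda>a b. disjnt (c a) (c b)) (\<Union>\<C>)"
      using pairwise_chain_Union[of \<C> "\<lambda>a b. disjnt (c a) (c b)"] by auto
    then show "\<Union>\<C> \<in> ?D" by simp
  qed
  then obtain M where "M \<in> ?D" and max: "\<forall>M'\<in>?D. M \<subseteq> M' \<longrightarrow> M' = M"
    by (rule Zorn_Lemma[THEN bexE])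
  then have M: "M \<subseteq> A" "pairwise (\<lambda>a b. disjnt (c a) (c b)) M" by auto
  have "\<exists>m\<in>M. \<not> disjnt (c a) (c m)" if a: "a \<in> A" for a
  proof (rule ccontr)
    assume "\<not> ?thesis"
    then have "pairwise (\<lambda>a b. disjnt (c a) (c b)) (insert a M)"
      using M(2) by (simp add: pairwise_insert disjnt_sym)
    with M(1) a have "insert a M \<in> ?D" by simp
    then have "a \<in> M" using max by blast
    with \<open>\<not> ?thesis\<close> assms[OF a] show False by (auto simp: disjnt_def)
  qed
  with M show ?thesis by blast
qed

lemma is_Csup_approx:
  assumes sup: "is_Csup Z F s" and "e > 0" and w: "w \<in> Cfun Z"
    and "z0 \<in> topspace Z" "w z0 > 0"
  obtains f z where "f \<in> F" "z \<in> topspace Z" "w z > 0" "s z - e < f z"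
proof -
  have "\<exists>f\<in>F. \<exists>z\<in>topspace Z. w z > 0 \<and> s z - e < f z"
  proof (rule ccontr)
    assume "\<not> ?thesis"
    then have below: "f z \<le> s z - e" if "f \<in> F" "z \<in> topspace Z" "w z > 0" for f z
      using that by (meson not_le)
    define u where "u z = s z - min e (max 0 (w z))" for z
    have "u \<in> Cfun Z"
      using sup w unfolding u_def is_Csup_def Cfun_def by (intro CollectI continuous_intros) auto
    moreover have "f z \<le> u z" if "f \<in> F" "z \<in> topspace Z" for f z
    proof (cases "w z > 0")
      case True
      then show ?thesis using below[OF that True] unfolding u_def by linarith
    next
      case False
      then show ?thesis using is_Csup_upper[OF sup that] unfolding u_def by simp
    qed
    ultimately have "s z0 \<le> u z0"
      using is_Csup_least[OF sup] \<open>z0 \<in> topspace Z\<close> by blast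
    with \<open>e > 0\<close> \<open>w z0 > 0\<close> show False unfolding u_def by simp
  qed
  with that show thesis by blast
qed

lemma is_Csup_subfamily:
  assumes sup: "is_Csup Z F s" and "F \<subseteq> Cfun Z" and "G \<subseteq> F"
    and dense: "\<And>n k. k \<in> Cfun Z \<Longrightarrow> cozero Z k \<noteq> {} \<Longrightarrow>
       \<exists>f\<in>F. \<forall>x\<in>cozero Z k. s x - 1 / Suc n < f x \<Longrightarrow>
       \<exists>g\<in>G. \<exists>z\<in>cozero Z k. s z - 1 / Suc n < g z"
  shows "is_Csup Z G s"
proof (rule is_CsupI)
  have s: "s \<in> Cfun Z" using sup unfolding is_Csup_def by blast
  then show "s \<in> Cfun Z" .
  show "f x \<le> s x" if "f \<in> G" "x \<in> topspace Z" for f x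
    using is_Csup_upper[OF sup] that \<open>G \<subseteq> F\<close> by blast
  fix u z0
  assume u: "u \<in> Cfun Z" and ub: "\<And>g x. g \<in> G \<Longrightarrow> x \<in> topspace Z \<Longrightarrow> g x \<le> u x"
    and z0: "z0 \<in> topspace Z"
  show "s z0 \<le> u z0"
  proof (rule ccontr)
    assume "\<not> s z0 \<le> u z0"
    define \<delta> where "\<delta> = s z0 - u z0"
    have "\<delta> > 0" using \<open>\<not> s z0 \<le> u z0\<close> unfolding \<delta>_def by simp
    then obtain n where n: "1 / real (Suc n) < \<delta> / 2"
      using reals_Archimedean[of "\<delta> / 2"] by (auto simp: inverse_eq_divide)
    define e where "e = 1 / real (Suc n)"
    define w where "w z = s z - u z - \<delta> / 2" for z
    have w: "w \<in> Cfun Z" using s u unfolding w_def Cfun_def by (auto intro!: continuous_intros)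
    obtain f z1 where f: "f \<in> F" and z1: "z1 \<in> topspace Z" "w z1 > 0" "s z1 - e < f z1"
      using is_Csup_approx[OF sup _ w z0, of e] \<open>\<delta> > 0\<close> unfolding e_def w_def \<delta>_def by auto
    define k where "k z = min (max 0 (w z)) (max 0 (f z - s z + e))" for z
    have "k \<in> Cfun Z"
      using s w f u \<open>F \<subseteq> Cfun Z\<close> unfolding k_def Cfun_def by (auto intro!: continuous_intros)
    moreover have "z1 \<in> cozero Z k" using z1 unfolding k_def by simp
    moreover have k_pos: "w x > 0 \<and> s x - e < f x" if "x \<in> cozero Z k" for x
      using that unfolding k_def by (auto simp: min_def max_def split: if_splits)
    ultimately obtain g z where "g \<in> G" "z \<in> cozero Z k" "s z - e < g z"
      using dense[of k n] f unfolding e_def by blast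
    moreover have "g z \<le> u z" using ub \<open>g \<in> G\<close> \<open>z \<in> cozero Z k\<close> by simp
    moreover have "w z > 0" using k_pos \<open>z \<in> cozero Z k\<close> by blast
    ultimately show False using n unfolding e_def w_def by linarith
  qed
qed

lemma countable_sup_property_if_cozero_ccc:
  assumes ccc: "cozero_ccc Z"
  shows "countable_sup_property Z"
  unfolding countable_sup_property_def
proof (intro allI impI, elim conjE)
  fix F s assume F: "F \<subseteq> Cfun Z" "F \<noteq> {}" and sup: "is_Csup Z F s"
  define A where "A n = {k \<in> Cfun Z. cozero Z k \<noteq> {} \<and> (\<exists>f\<in>F. \<forall>x\<in>cozero Z k. s x - 1 / Suc n < f x)}"
    for n :: nat
  have "\<forall>n. \<exists>M. M \<subseteq> A n \<and> pairwise (\<lambda>h k. disjnt (cozero Z h) (cozero Z k)) M \<and>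
          (\<forall>k\<in>A n. \<exists>h\<in>M. \<not> disjnt (cozero Z k) (cozero Z h))"
    using maximal_pairwise_disjnt_subfamily[of "A _" "cozero Z"] by (simp add: A_def)
  then obtain M where M: "\<And>n. M n \<subseteq> A n" "\<And>n. pairwise (\<lambda>h k. disjnt (cozero Z h) (cozero Z k)) (M n)"
    and maximal: "\<And>n k. k \<in> A n \<Longrightarrow> \<exists>h\<in>M n. \<not> disjnt (cozero Z k) (cozero Z h)"
    unfolding choice_iff by blast
  have M_countable: "countable (M n)" for n
  proof -
    have "M n \<subseteq> Cfun Z" "\<forall>h\<in>M n. cozero Z h \<noteq> {}" using M(1)[of n] unfolding A_def by auto
    with M(2)[of n] ccc show ?thesis unfolding cozero_ccc_def by blast
  qed
  define fh where "fh n h = (SOME f. f \<in> F \<and> (\<forall>x\<in>cozero Z h. s x - 1 / Suc n < f x))" for n h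
  have fh: "fh n h \<in> F \<and> (\<forall>x\<in>cozero Z h. s x - 1 / Suc n < fh n h x)" if "h \<in> M n" for n h
  proof -
    have "\<exists>f. f \<in> F \<and> (\<forall>x\<in>cozero Z h. s x - 1 / Suc n < f x)"
      using M(1)[of n] that unfolding A_def by blast
    then show ?thesis unfolding fh_def by (rule someI_ex)
  qed
  obtain f0 where "f0 \<in> F" using \<open>F \<noteq> {}\<close> by blast
  define G where "G = insert f0 (\<Union>n. fh n ` M n)"
  have "G \<subseteq> F" using \<open>f0 \<in> F\<close> fh unfolding G_def by blast
  moreover have "countable G"
    unfolding G_def using M_countable by (intro countable_insert countable_UN countable_image) auto
  moreover have "is_Csup Z G s"
  proof (rule is_Csup_subfamily[OF sup F(1) \<open>G \<subseteq> F\<close>])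
    fix n k assume "k \<in> Cfun Z" "cozero Z k \<noteq> {}" "\<exists>f\<in>F. \<forall>x\<in>cozero Z k. s x - 1 / Suc n < f x"
    then have "k \<in> A n" unfolding A_def by blast
    then obtain h z where "h \<in> M n" "z \<in> cozero Z k" "z \<in> cozero Z h"
      using maximal[of k n] unfolding disjnt_def by blast
    moreover have "fh n h \<in> G" using \<open>h \<in> M n\<close> unfolding G_def by blast
    ultimately show "\<exists>g\<in>G. \<exists>z\<in>cozero Z k. s z - 1 / Suc n < g z"
      using fh[of h n] by blast
  qed
  ultimately show "\<exists>G\<subseteq>F. countable G \<and> G \<noteq> {} \<and> is_Csup Z G s"
    unfolding G_def by blast
qed

lemma normalized_bump:
  assumes w: "w \<in> Cfun Z" and nonneg: "\<And>x. x \<in> topspace Z \<Longrightarrow> 0 \<le> w x" and "w x1 > 0"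
  obtains g where "g \<in> Cfun Z" "g x1 = 1" "\<And>x. x \<in> topspace Z \<Longrightarrow> 0 \<le> g x \<and> g x \<le> 1"
    "cozero Z g = cozero Z w"
proof
  show "(\<lambda>x. min 1 (w x / w x1)) \<in> Cfun Z"
    using w \<open>w x1 > 0\<close> unfolding Cfun_def by (intro CollectI continuous_intros) auto
  show "min 1 (w x1 / w x1) = 1" using \<open>w x1 > 0\<close> by simp
  show "0 \<le> min 1 (w x / w x1) \<and> min 1 (w x / w x1) \<le> 1" if "x \<in> topspace Z" for x
    using nonneg[OF that] \<open>w x1 > 0\<close> by simp
  show "cozero Z (\<lambda>x. min 1 (w x / w x1)) = cozero Z w"
    using nonneg \<open>w x1 > 0\<close> unfolding cozero_def by (auto simp: min_def)
qed

definition subordinate_bumps :: "'a topology \<Rightarrow> ('a \<Rightarrow> real) set \<Rightarrow> ('a \<Rightarrow> real) set" where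
  "subordinate_bumps X H =
     {g \<in> Cfun X. (\<forall>x\<in>topspace X. 0 \<le> g x \<and> g x \<le> 1) \<and>
        ((\<exists>h\<in>H. cozero X g \<subseteq> cozero X h) \<or> (\<forall>h\<in>H. disjnt (cozero X g) (cozero X h)))}"

lemma is_Csup_subordinate_bumps:
  assumes H: "H \<subseteq> Cfun X"
  shows "is_Csup X (subordinate_bumps X H) (\<lambda>x. 1)"
proof (rule is_CsupI)
  show "(\<lambda>x. 1) \<in> Cfun X" by (simp add: Cfun_def)
next
  show "g x \<le> 1" if "g \<in> subordinate_bumps X H" "x \<in> topspace X" for g x
    using that unfolding subordinate_bumps_def by simp
next
  fix u x0
  assume u: "u \<in> Cfun X" and ub: "\<And>g x. g \<in> subordinate_bumps X H \<Longrightarrow> x \<in> topspace X \<Longrightarrow> g x \<le> u x"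
    and x0: "x0 \<in> topspace X"
  show "1 \<le> u x0"
  proof (rule ccontr)
    assume "\<not> 1 \<le> u x0"
    define v where "v x = max 0 (1 - u x)" for x
    have v: "v \<in> Cfun X" "\<And>x. 0 \<le> v x" and "v x0 > 0"
      using u \<open>\<not> 1 \<le> u x0\<close> unfolding v_def Cfun_def by (auto intro!: continuous_intros)
    obtain w x1 where w: "w \<in> Cfun X" "\<And>x. 0 \<le> w x" and x1: "x1 \<in> topspace X" "w x1 > 0"
      and "cozero X w \<subseteq> cozero X v"
      and sub: "(\<exists>h\<in>H. cozero X w \<subseteq> cozero X h) \<or> (\<forall>h\<in>H. disjnt (cozero X w) (cozero X h))"
    proof (cases "\<exists>h\<in>H. \<not> disjnt (cozero X v) (cozero X h)")
      case True
      then obtain h x1 where "h \<in> H" "x1 \<in> topspace X" "h x1 \<noteq> 0" "v x1 \<noteq> 0"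
        unfolding disjnt_def by auto
      moreover have "(\<lambda>x. min \<bar>h x\<bar> (v x)) \<in> Cfun X"
        using H v(1) \<open>h \<in> H\<close> unfolding Cfun_def by (auto intro!: continuous_intros)
      moreover have "cozero X (\<lambda>x. min \<bar>h x\<bar> (v x)) \<subseteq> cozero X h"
        "cozero X (\<lambda>x. min \<bar>h x\<bar> (v x)) \<subseteq> cozero X v"
        using v(2) by (auto simp: min_def split: if_splits)
      ultimately show thesis
        using v(2) by (intro that[of "\<lambda>x. min \<bar>h x\<bar> (v x)" x1]) (auto simp: less_le)
    next
      case False
      then show thesis using v \<open>v x0 > 0\<close> x0 by (intro that[of v x0]) auto
    qed
    obtain g where "g \<in> Cfun X" "g x1 = 1" "\<And>x. x \<in> topspace X \<Longrightarrow> 0 \<le> g x \<and> g x \<le> 1"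
      "cozero X g = cozero X w"
      using normalized_bump[OF w(1) w(2) x1(2)] by blast
    with sub have "g \<in> subordinate_bumps X H" unfolding subordinate_bumps_def by auto
    then have "1 \<le> u x1" using ub x1(1) \<open>g x1 = 1\<close> by fastforce
    moreover have "x1 \<in> cozero X v"
      using x1 \<open>cozero X w \<subseteq> cozero X v\<close> by force
    ultimately show False unfolding v_def by simp
  qed
qed

lemma cozero_ccc_if_countable_sup_property:
  assumes csp: "countable_sup_property X"
  shows "cozero_ccc X"
  unfolding cozero_ccc_def
proof (intro allI impI, elim conjE)
  fix H assume H: "H \<subseteq> Cfun X" and ne: "\<forall>h\<in>H. cozero X h \<noteq> {}"
    and disj: "pairwise (\<lambda>h k. disjnt (cozero X h) (cozero X k)) H"
  let ?F = "subordinate_bumps X H"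
  have "(\<lambda>x. 0) \<in> ?F" unfolding subordinate_bumps_def Cfun_def cozero_def by simp
  moreover have "?F \<subseteq> Cfun X" unfolding subordinate_bumps_def by blast
  ultimately have "\<exists>G. G \<subseteq> ?F \<and> countable G \<and> G \<noteq> {} \<and> is_Csup X G (\<lambda>x. 1)"
    using csp is_Csup_subordinate_bumps[OF H] unfolding countable_sup_property_def by blast
  then obtain G where G: "G \<subseteq> ?F" "countable G" "is_Csup X G (\<lambda>x. 1)"
    by blast
  have cover: "H \<subseteq> (\<Union>g\<in>G. {h\<in>H. \<not> disjnt (cozero X g) (cozero X h)})"
  proof
    fix h assume "h \<in> H"
    show "h \<in> (\<Union>g\<in>G. {h\<in>H. \<not> disjnt (cozero X g) (cozero X h)})"
    proof (rule ccontr)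
      assume "\<not> ?thesis"
      with \<open>h \<in> H\<close> have miss: "\<And>g x. g \<in> G \<Longrightarrow> x \<in> topspace X \<Longrightarrow> g x \<noteq> 0 \<Longrightarrow> h x = 0"
        unfolding disjnt_def cozero_def by blast
      define u where "u x = 1 - min 1 \<bar>h x\<bar>" for x
      have "u \<in> Cfun X"
        using H \<open>h \<in> H\<close> unfolding u_def Cfun_def by (auto intro!: continuous_intros)
      moreover have "g x \<le> u x" if "g \<in> G" "x \<in> topspace X" for g x
        using miss[OF that] G(1) that unfolding u_def subordinate_bumps_def by fastforce
      ultimately have "1 \<le> u x" if "x \<in> topspace X" for x
        using is_Csup_least[OF G(3)] that by blast
      moreover obtain x where "x \<in> topspace X" "h x \<noteq> 0"
        using ne \<open>h \<in> H\<close> unfolding cozero_def by blast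
      ultimately have "1 \<le> u x" by blast
      with \<open>h x \<noteq> 0\<close> show False unfolding u_def by (simp add: min_def split: if_splits)
    qed
  qed
  have meets_countable: "countable {h\<in>H. \<not> disjnt (cozero X g) (cozero X h)}" if "g \<in> G" for g
  proof -
    have "(\<exists>h\<in>H. cozero X g \<subseteq> cozero X h) \<or> (\<forall>h\<in>H. disjnt (cozero X g) (cozero X h))"
      using G(1) that unfolding subordinate_bumps_def by blast
    then show ?thesis
    proof (elim disjE bexE)
      fix h0 assume "h0 \<in> H" "cozero X g \<subseteq> cozero X h0"
      have "h = h0" if "h \<in> H" "\<not> disjnt (cozero X g) (cozero X h)" for h
      proof (rule ccontr)
        assume "h \<noteq> h0"
        then have "disjnt (cozero X h) (cozero X h0)"
          using disj \<open>h \<in> H\<close> \<open>h0 \<in> H\<close> unfolding pairwise_def by blast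
        with that(2) \<open>cozero X g \<subseteq> cozero X h0\<close> show False
          unfolding disjnt_def by blast
      qed
      then have "{h\<in>H. \<not> disjnt (cozero X g) (cozero X h)} \<subseteq> {h0}" by blast
      then show ?thesis by (rule countable_subset) simp
    next
      assume "\<forall>h\<in>H. disjnt (cozero X g) (cozero X h)"
      then have "{h\<in>H. \<not> disjnt (cozero X g) (cozero X h)} = {}" by blast
      then show ?thesis by (simp only: countable_empty)
    qed
  qed
  show "countable H"
    using cover countable_UN[OF G(2) meets_countable] by (rule countable_subset)
qed

lemma Cfun_slice_fst:
  assumes "h \<in> Cfun (prod_topology X Y)" "y \<in> topspace Y"
  shows "(\<lambda>x. h (x, y)) \<in> Cfun X"
proof -
  have "continuous_map X (prod_topology X Y) (\<lambda>x. (x, y))"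
    using assms(2) by (intro continuous_map_pairedI) auto
  from continuous_map_compose[OF this] assms(1) show ?thesis
    by (auto simp: Cfun_def o_def)
qed

lemma Cfun_slice_snd:
  assumes "h \<in> Cfun (prod_topology X Y)" "x \<in> topspace X"
  shows "(\<lambda>y. h (x, y)) \<in> Cfun Y"
proof -
  have "continuous_map Y (prod_topology X Y) (\<lambda>y. (x, y))"
    using assms(2) by (intro continuous_map_pairedI) auto
  from continuous_map_compose[OF this] assms(1) show ?thesis
    by (auto simp: Cfun_def o_def)
qed

lemma uncountable_fibre:
  assumes "uncountable A" "countable (f ` A)"
  obtains a where "a \<in> A" "uncountable {x\<in>A. f x = f a}"
proof -
  have "\<exists>a\<in>A. uncountable {x\<in>A. f x = f a}"
  proof (rule ccontr)
    assume "\<not> ?thesis"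
    then have "countable (\<Union>b\<in>f ` A. {x\<in>A. f x = b})"
      using assms(2) by (intro countable_UN) auto
    moreover have "(\<Union>b\<in>f ` A. {x\<in>A. f x = b}) = A" by auto
    ultimately show False using assms(1) by simp
  qed
  with that show ?thesis by blast
qed

lemma calibre_aleph1_indexed:
  assumes "calibre_aleph1 Y" "uncountable I" "\<And>i. i \<in> I \<Longrightarrow> openin Y (B i) \<and> B i \<noteq> {}"
  obtains J where "J \<subseteq> I" "uncountable J" "(\<Inter>i\<in>J. B i) \<noteq> {}"
proof (cases "countable (B ` I)")
  case True
  then obtain i where i: "i \<in> I" "uncountable {j\<in>I. B j = B i}"
    by (rule uncountable_fibre[OF assms(2)])
  have "B i \<subseteq> (\<Inter>j\<in>{j\<in>I. B j = B i}. B j)" by auto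
  with i assms(3)[OF i(1)] show ?thesis
    by (intro that[of "{j\<in>I. B j = B i}"]) auto
next
  case False
  have "B ` I \<subseteq> {U. openin Y U \<and> U \<noteq> {}}" using assms(3) by auto
  with False obtain \<V> where \<V>: "\<V> \<subseteq> B ` I" "uncountable \<V>" "\<Inter>\<V> \<noteq> {}"
    using assms(1) unfolding calibre_aleph1_def by meson
  then have "B ` {i\<in>I. B i \<in> \<V>} = \<V>" by auto
  then have "uncountable {i\<in>I. B i \<in> \<V>}" "(\<Inter>i\<in>{i\<in>I. B i \<in> \<V>}. B i) = \<Inter>\<V>"
    using \<V>(2) countable_image[where f=B] by metis+
  with \<V>(3) show ?thesis by (intro that[of "{i\<in>I. B i \<in> \<V>}"]) simp_all
qed

lemma countable_if_nonzero_on_slice: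
  assumes ccc: "cozero_ccc X" and H: "H \<subseteq> Cfun (prod_topology X Y)"
    and disj: "pairwise (\<lambda>h k. disjnt (cozero (prod_topology X Y) h) (cozero (prod_topology X Y) k)) H"
    and y: "y \<in> topspace Y" and nz: "\<And>h. h \<in> H \<Longrightarrow> \<exists>x\<in>topspace X. h (x, y) \<noteq> 0"
  shows "countable H"
proof -
  define slice where "slice h = (\<lambda>x. h (x, y))" for h :: "'a \<times> 'b \<Rightarrow> real"
  have overlap: "h = k" if "h \<in> H" "k \<in> H" "x \<in> topspace X" "h (x, y) \<noteq> 0" "k (x, y) \<noteq> 0" for h k x
  proof (rule ccontr)
    assume "h \<noteq> k"
    then have "disjnt (cozero (prod_topology X Y) h) (cozero (prod_topology X Y) k)"
      using disj that(1,2) unfolding pairwise_def by blast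
    moreover have "(x, y) \<in> cozero (prod_topology X Y) h \<inter> cozero (prod_topology X Y) k"
      using that y by simp
    ultimately show False unfolding disjnt_def by blast
  qed
  have "slice ` H \<subseteq> Cfun X"
    using H y by (auto simp: slice_def intro: Cfun_slice_fst)
  moreover have "\<forall>g\<in>slice ` H. cozero X g \<noteq> {}"
    using nz unfolding slice_def cozero_def by fastforce
  moreover have "pairwise (\<lambda>g g'. disjnt (cozero X g) (cozero X g')) (slice ` H)"
    unfolding pairwise_image
  proof (intro pairwiseI impI)
    fix h k assume hk: "h \<in> H" "k \<in> H" "slice h \<noteq> slice k"
    then have "h \<noteq> k" by auto
    with hk(1,2) show "disjnt (cozero X (slice h)) (cozero X (slice k))"
      using overlap[of h k] unfolding disjnt_def slice_def by auto
  qed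
  ultimately have "countable (slice ` H)"
    using ccc unfolding cozero_ccc_def by blast
  moreover have "inj_on slice H"
  proof (rule inj_onI)
    fix h k assume hk: "h \<in> H" "k \<in> H" "slice h = slice k"
    obtain x where "x \<in> topspace X" "h (x, y) \<noteq> 0" using nz[OF hk(1)] by blast
    with hk show "h = k" using overlap[of h k x] fun_cong[OF hk(3), of x] unfolding slice_def by simp
  qed
  ultimately show ?thesis by (rule countable_image_inj_on)
qed

lemma cozero_ccc_prod_topology:
  assumes ccc: "cozero_ccc X" and cal: "calibre_aleph1 Y"
  shows "cozero_ccc (prod_topology X Y)"
  unfolding cozero_ccc_def
proof (intro allI impI, elim conjE)
  fix H assume H: "H \<subseteq> Cfun (prod_topology X Y)" and ne: "\<forall>h\<in>H. cozero (prod_topology X Y) h \<noteq> {}"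
    and disj: "pairwise (\<lambda>h k. disjnt (cozero (prod_topology X Y) h) (cozero (prod_topology X Y) k)) H"
  define p where "p h = (SOME z. z \<in> cozero (prod_topology X Y) h)" for h
  have p: "p h \<in> cozero (prod_topology X Y) h" if "h \<in> H" for h
    using ne that unfolding p_def some_in_eq by blast
  define B where "B h = cozero Y (\<lambda>y. h (fst (p h), y))" for h
  have B: "openin Y (B h) \<and> B h \<noteq> {}" if "h \<in> H" for h
  proof
    have "fst (p h) \<in> topspace X" "snd (p h) \<in> topspace Y" "h (fst (p h), snd (p h)) \<noteq> 0"
      using p[OF that] by auto
    then show "openin Y (B h)" "B h \<noteq> {}"
      using Cfun_slice_snd H that openin_cozero unfolding B_def by fastforce+
  qed
  show "countable H"
  proof (rule ccontr)
    assume "uncountable H"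
    then obtain J where J: "J \<subseteq> H" "uncountable J" "(\<Inter>h\<in>J. B h) \<noteq> {}"
      using B by (rule calibre_aleph1_indexed[OF cal])
    then obtain y where "y \<in> (\<Inter>h\<in>J. B h)" by blast
    then have y: "\<And>h. h \<in> J \<Longrightarrow> y \<in> B h" by blast
    have "y \<in> topspace Y" using y J(2) unfolding B_def
      by (metis cozero_iff countable_empty ex_in_conv)
    moreover have "J \<subseteq> Cfun (prod_topology X Y)" using J(1) H by (rule order_trans)
    moreover have "\<exists>x\<in>topspace X. h (x, y) \<noteq> 0" if "h \<in> J" for h
      using p[of h] y[OF that] J(1) that unfolding B_def by (auto simp: mem_Times_iff)
    ultimately have "countable J"
      using countable_if_nonzero_on_slice[OF ccc _ pairwise_subset[OF disj J(1)]] by blast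
    with J(2) show False ..
  qed
qed

theorem theorem6p2:
  fixes X :: "'a topology" and Y :: "'b topology"
  assumes "countable_sup_property X"
    and "calibre_aleph1 Y"
  shows "countable_sup_property (prod_topology X Y)"
proof -
  have "cozero_ccc X" using assms(1) by (rule cozero_ccc_if_countable_sup_property)
  then have "cozero_ccc (prod_topology X Y)" using assms(2) by (rule cozero_ccc_prod_topology)
  then show ?thesis by (rule countable_sup_property_if_cozero_ccc)
qed

end
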